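(* Let $(X,G)$ be an association scheme. Assume there exist $c,k,\ell\in\mathbb{N}$ and real numbers $0<\delta_1,\delta'_1,\delta'_2\leq 1$ with $1<\ell<(\delta_1^2/\delta'_1)\cdot k$ such that for all $g\in G$ with $g\neq 1$, \[\delta_1 k\leq n_g\leq \delta'_1 k \quad\text{and}\quad c(g)\leq \delta'_2 c.\] If $|G|\geq 2(\delta'_1/\delta_1)^3\delta'_2\cdot\frac{c}{\ell-1}+2$, then there exist relations $u,v,w,w'\in G\setminus\{1\}$ with $u\neq v$ and $w\neq w'$ such that $0<c^{w}_{u^{*}v}\leq c^{w'}_{u^{*}v}<\ell$.
   Context: An association scheme is a pair $(X,G)$ where $X$ is a finite set and $G$ is a partition of $X\times X$ such that (1) $G$ contains the identity relation $1:=\{(x,x)\mid x\in X\}$; (2) if $g\in G$ then $g^{*}:=\{(y,x)\mid (x,y)\in g\}\in G$; (3) for all $f,g,h\in G$ there is an integer $c^{h}_{fg}$ (intersection number) such that for all $(\alpha,\beta)\in h$, $c^{h}_{fg}=\#\{\gamma\in X\mid (\alpha,\gamma)\in f,\ (\gamma,\beta)\in g\}$. Elements of $G$ are called relations. For $g\in G$, its valency is $n_g:=c^{1}_{gg^{*}}$ and its indistinguishing number is $c(g):=\sum_{v\in G}c^{g}_{vv^{*}}$. *)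

theory Defs
  imports Complex_Main
begin

definition assoc_scheme :: "'a set \<Rightarrow> ('a \<times> 'a) set set \<Rightarrow> bool" where
  "assoc_scheme X G \<longleftrightarrow>
     finite X \<and>
     (\<forall>g\<in>G. g \<noteq> {} \<and> g \<subseteq> X \<times> X) \<and>
     (\<forall>g\<in>G. \<forall>h\<in>G. g \<noteq> h \<longrightarrow> g \<inter> h = {}) \<and>
     \<Union>G = X \<times> X \<and>
     Id_on X \<in> G \<and>
     (\<forall>g\<in>G. g\<inverse> \<in> G) \<and>
     (\<forall>f\<in>G. \<forall>g\<in>G. \<forall>h\<in>G. \<exists>c::nat. \<forall>(\<alpha>,\<beta>)\<in>h.
        card {\<gamma>\<in>X. (\<alpha>,\<gamma>) \<in> f \<and> (\<gamma>,\<beta>) \<in> g} = c)"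

text \<open>Intersection number c^h_{fg}: evaluated at some pair of h (well defined in a scheme).\<close>
definition inter_num :: "'a set \<Rightarrow> ('a \<times> 'a) set \<Rightarrow> ('a \<times> 'a) set \<Rightarrow> ('a \<times> 'a) set \<Rightarrow> nat" where
  "inter_num X f g h =
     (let p = (SOME p. p \<in> h) in card {\<gamma>\<in>X. (fst p,\<gamma>) \<in> f \<and> (\<gamma>,snd p) \<in> g})"

definition valency :: "'a set \<Rightarrow> ('a \<times> 'a) set \<Rightarrow> nat" where
  "valency X g = inter_num X g (g\<inverse>) (Id_on X)"

definition indist_num :: "'a set \<Rightarrow> ('a \<times> 'a) set set \<Rightarrow> ('a \<times> 'a) set \<Rightarrow> nat" where
  "indist_num X G g = (\<Sum>v\<in>G. inter_num X v (v\<inverse>) g)"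

end

theory Submission
  imports Defs
begin

text \<open>
  Suppose the configuration does not exist. Fix a non-identity relation \<open>a\<close>, a point \<open>\<alpha>\<close>, and put
  \<open>U = a(\<alpha>)\<close>. For \<open>v \<notin> {1, a\<^sup>*}\<close> let \<open>m\<^sub>v(\<beta>) = |U \<inter> v\<^sup>*(\<beta>)|\<close>; this is \<open>c\<^sup>w\<^sub>a\<^sub>v\<close> for the relation
  \<open>w\<close> of \<open>(\<alpha>, \<beta>)\<close>, hence constant on each sphere \<open>w(\<alpha>)\<close>. Without the configuration, all \<open>\<beta>\<close> with
  \<open>0 < m\<^sub>v(\<beta>) < l\<close> lie in a single sphere, so they carry at most \<open>(l - 1) \<delta>'\<^sub>1 k\<close> of the total mass
  \<open>\<Sum>\<^sub>\<beta> m\<^sub>v(\<beta>) = n\<^sub>a n\<^sub>v \<ge> \<delta>\<^sub>1\<^sup>2 k\<^sup>2\<close>; the points with \<open>m\<^sub>v(\<beta>) \<ge> l\<close> then carry at least \<open>\<delta>\<^sub>1\<^sup>3 k\<^sup>2 / (2 \<delta>'\<^sub>1)\<close>.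
  Finally count triples \<open>(\<beta>, x, y)\<close> with \<open>x \<noteq> y\<close> in \<open>U\<close> such that \<open>(x, \<beta>)\<close> and \<open>(y, \<beta>)\<close> lie in the
  same relation. Grouped by \<open>(x, y)\<close> there are at most \<open>|U|(|U| - 1) \<delta>'\<^sub>2 c\<close> of them; grouped by \<open>\<beta>\<close>
  and the relation there are \<open>\<Sum>\<^sub>v \<Sum>\<^sub>\<beta> m\<^sub>v(\<beta>)(m\<^sub>v(\<beta>) - 1)\<close>, which is at least \<open>|U|(|U| - 1)\<close>
  (from \<open>\<beta> = \<alpha>\<close>) plus \<open>(l - 1)(|G| - 2) \<delta>\<^sub>1\<^sup>3 k\<^sup>2 / (2 \<delta>'\<^sub>1)\<close>. As \<open>|U| \<le> \<delta>'\<^sub>1 k\<close>, the bound on \<open>|G|\<close>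
  makes the second count exceed the first.
\<close>

definition path_count :: "('a \<times> 'a) set \<Rightarrow> ('a \<times> 'a) set \<Rightarrow> 'a \<Rightarrow> 'a \<Rightarrow> nat" where
  "path_count f g x y = card (f `` {x} \<inter> g\<inverse> `` {y})"

definition small_intersection_configuration :: "'a set \<Rightarrow> ('a \<times> 'a) set set \<Rightarrow> nat \<Rightarrow> bool" where
  "small_intersection_configuration X G l \<longleftrightarrow>
     (\<exists>u\<in>G - {Id_on X}. \<exists>v\<in>G - {Id_on X}. \<exists>w\<in>G - {Id_on X}. \<exists>w'\<in>G - {Id_on X}.
        u \<noteq> v \<and> w \<noteq> w' \<and>
        0 < inter_num X (u\<inverse>) v w \<and>
        inter_num X (u\<inverse>) v w \<le> inter_num X (u\<inverse>) v w' \<and>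
        inter_num X (u\<inverse>) v w' < l)"

lemma card_Times_Diff_Id:
  assumes "finite S"
  shows "card (S \<times> S - Id) = card S * (card S - 1)"
proof -
  have "(S \<times> S) \<inter> Id = (\<lambda>x. (x, x)) ` S"
    by auto
  then have "card ((S \<times> S) \<inter> Id) = card S"
    by (simp add: card_image inj_on_def)
  then show ?thesis
    using assms by (simp add: card_Diff_subset_Int card_cartesian_product diff_mult_distrib2)
qed

lemma sum_card_filter_swap:
  assumes "finite A" "finite B"
  shows "(\<Sum>x\<in>A. card {y\<in>B. R x y}) = (\<Sum>y\<in>B. card {x\<in>A. R x y})"
  unfolding card_eq_sum by (rule sum.swap_restrict[OF assms])

lemma sum_le_sum_large_plus_small:
  fixes f :: "'a \<Rightarrow> nat"
  assumes "finite A"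
  shows "(\<Sum>x\<in>A. f x) \<le> (\<Sum>x\<in>{x\<in>A. l \<le> f x}. f x) + (l - 1) * card {x\<in>A. 0 < f x \<and> f x < l}"
proof -
  let ?L = "{x\<in>A. l \<le> f x}" and ?S = "{x\<in>A. 0 < f x \<and> f x < l}"
  have "(\<Sum>x\<in>A. f x) = (\<Sum>x\<in>A - ?L. f x) + (\<Sum>x\<in>?L. f x)"
    using sum.subset_diff[of ?L A f] assms by auto
  also have "(\<Sum>x\<in>A - ?L. f x) = (\<Sum>x\<in>?S. f x)"
    by (rule sum.mono_neutral_right) (use assms in auto)
  also have "\<dots> \<le> card ?S * (l - 1)"
    using sum_bounded_above[of ?S f "l - 1"] by fastforce
  finally show ?thesis
    by (simp add: add.commute mult.commute)
qed

lemma cube_bound_from_two_lower_bounds: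
  fixes L p q l :: real
  assumes "0 < p" "p \<le> q" "1 < l" "p\<^sup>2 - (l - 1) * q \<le> L" "l * p \<le> L"
  shows "p ^ 3 / (2 * q) \<le> L"
proof (cases "(l - 1) * q \<le> p\<^sup>2 / 2")
  case True
  have "p ^ 3 / (2 * q) \<le> p\<^sup>2 / 2"
    using assms(1,2) by (simp add: divide_simps power2_eq_square power3_eq_cube mult_left_mono)
  then show ?thesis
    using True assms(4) by linarith
next
  case False
  then have "p ^ 3 < p * (2 * ((l - 1) * q))"
    using assms(1) by (simp add: power3_eq_cube power2_eq_square)
  then have "p ^ 3 / (2 * q) < p * (l - 1)"
    using assms(1,2) by (simp add: divide_simps algebra_simps)
  then show ?thesis
    using assms(1,5) by (simp add: algebra_simps)
qed

lemma pair_count_exceeds_indist_bound: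
  fixes P S N p q r l :: real
  assumes "0 < P" "P \<le> q\<^sup>2" "0 < p" "0 < q" "0 \<le> r" "1 < l"
    and "N * (p ^ 3 / (2 * q)) \<le> S" "2 * (q / p) ^ 3 * r \<le> (l - 1) * N"
  shows "P * r < P + (l - 1) * S"
proof -
  have "P * r \<le> q\<^sup>2 * r"
    using assms(2,5) by (rule mult_right_mono)
  also have "\<dots> = 2 * (q / p) ^ 3 * r * (p ^ 3 / (2 * q))"
    using assms(3,4) by (simp add: field_simps power2_eq_square power3_eq_cube)
  also have "\<dots> \<le> (l - 1) * N * (p ^ 3 / (2 * q))"
    using assms(3,4,8) by (intro mult_right_mono) auto
  also have "\<dots> \<le> (l - 1) * S"
    using assms(6,7) mult_left_mono[of "N * (p ^ 3 / (2 * q))" S "l - 1"] by (simp add: mult.assoc)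
  finally show ?thesis
    using assms(1) by linarith
qed

locale association_scheme =
  fixes X :: "'a set" and G :: "('a \<times> 'a) set set"
  assumes scheme: "assoc_scheme X G"
begin

lemma finite_X: "finite X"
  using scheme by (simp add: assoc_scheme_def)

lemma relation_nonempty: "g \<in> G \<Longrightarrow> g \<noteq> {}"
  and relation_subset: "g \<in> G \<Longrightarrow> g \<subseteq> X \<times> X"
  using scheme by (simp_all add: assoc_scheme_def)

lemma Id_on_in: "Id_on X \<in> G"
  using scheme by (simp add: assoc_scheme_def)

lemma converse_in: "g \<in> G \<Longrightarrow> g\<inverse> \<in> G"
  using scheme by (simp add: assoc_scheme_def)

lemma converse_in_nonidentity:
  assumes "g \<in> G - {Id_on X}"
  shows "g\<inverse> \<in> G - {Id_on X}"
proof -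
  have "g\<inverse> \<noteq> Id_on X"
  proof
    assume "g\<inverse> = Id_on X"
    then have "g = Id_on X"
      by (metis converse_Id_on converse_converse)
    then show False
      using assms by simp
  qed
  then show ?thesis
    using assms converse_in by simp
qed

lemma relation_unique:
  assumes "g \<in> G" "h \<in> G" "p \<in> g" "p \<in> h"
  shows "g = h"
proof -
  have "\<forall>g\<in>G. \<forall>h\<in>G. g \<noteq> h \<longrightarrow> g \<inter> h = {}"
    using scheme by (simp add: assoc_scheme_def)
  then show ?thesis
    using assms by blast
qed

lemma relation_exists:
  assumes "x \<in> X" "y \<in> X"
  obtains g where "g \<in> G" "(x, y) \<in> g"
proof -
  have "\<Union>G = X \<times> X"
    using scheme by (simp add: assoc_scheme_def)
  then show ?thesis
    using assms that by blast
qed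

lemma finite_G: "finite G"
  using relation_subset finite_X by (intro finite_subset[of G "Pow (X \<times> X)"]) auto

lemma intersection_number_exists:
  "\<forall>f\<in>G. \<forall>g\<in>G. \<forall>h\<in>G. \<exists>c::nat. \<forall>(\<alpha>, \<beta>)\<in>h.
     card {\<gamma>\<in>X. (\<alpha>, \<gamma>) \<in> f \<and> (\<gamma>, \<beta>) \<in> g} = c"
  using scheme unfolding assoc_scheme_def by (elim conjE)

lemma inter_num_eq_path_count:
  assumes "f \<in> G" "g \<in> G" "h \<in> G" "(x, y) \<in> h"
  shows "inter_num X f g h = path_count f g x y"
proof -
  obtain c :: nat where c: "\<forall>(\<alpha>, \<beta>)\<in>h. card {\<gamma>\<in>X. (\<alpha>, \<gamma>) \<in> f \<and> (\<gamma>, \<beta>) \<in> g} = c"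
    using intersection_number_exists assms(1-3) by blast
  obtain \<alpha> \<beta> where chosen: "(SOME p. p \<in> h) = (\<alpha>, \<beta>)"
    by (cases "SOME p. p \<in> h") auto
  have "(\<alpha>, \<beta>) \<in> h"
    using someI[of "\<lambda>p. p \<in> h", OF assms(4)] chosen by simp
  then have "inter_num X f g h = c"
    unfolding inter_num_def Let_def chosen using c by auto
  moreover have "{\<gamma>\<in>X. (x, \<gamma>) \<in> f \<and> (\<gamma>, y) \<in> g} = f `` {x} \<inter> g\<inverse> `` {y}"
    using relation_subset assms(1) by blast
  ultimately show ?thesis
    using c assms(4) unfolding path_count_def by fastforce
qed

lemma finite_relation_Image: "g \<in> G \<Longrightarrow> finite (g `` {x})"
  using relation_subset finite_X by (blast intro: finite_subset)

lemma relation_of_pair: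
  assumes "x \<in> X" "y \<in> X" "x \<noteq> y"
  obtains g where "g \<in> G - {Id_on X}" "(x, y) \<in> g"
  using relation_exists[OF assms(1,2)] assms(3) by blast

lemma valency_eq_card:
  assumes "g \<in> G" "x \<in> X"
  shows "valency X g = card (g `` {x})"
proof -
  have "(x, x) \<in> Id_on X"
    using assms(2) by (rule Id_onI)
  then have "valency X g = path_count g (g\<inverse>) x x"
    unfolding valency_def by (rule inter_num_eq_path_count[OF assms(1) converse_in[OF assms(1)] Id_on_in])
  then show ?thesis
    by (simp add: path_count_def)
qed

lemma indist_num_eq_card:
  assumes "g \<in> G" "(x, y) \<in> g"
  shows "indist_num X G g = card {\<beta>\<in>X. \<exists>v\<in>G. (x, \<beta>) \<in> v \<and> (y, \<beta>) \<in> v}"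
proof -
  have "indist_num X G g = (\<Sum>v\<in>G. card (v `` {x} \<inter> v `` {y}))"
    unfolding indist_num_def path_count_def
    by (rule sum.cong) (simp_all add: inter_num_eq_path_count[OF _ _ assms] converse_in path_count_def)
  also have "\<dots> = card (\<Union>v\<in>G. v `` {x} \<inter> v `` {y})"
    by (rule card_UN_disjoint[symmetric]) (auto simp: finite_G finite_relation_Image dest: relation_unique)
  also have "(\<Union>v\<in>G. v `` {x} \<inter> v `` {y}) = {\<beta>\<in>X. \<exists>v\<in>G. (x, \<beta>) \<in> v \<and> (y, \<beta>) \<in> v}"
    using relation_subset by blast
  finally show ?thesis .
qed

lemma path_count_const_on_relation:
  assumes "a \<in> G" "v \<in> G" "w \<in> G" "(\<alpha>, \<beta>) \<in> w" "(\<alpha>, \<beta>') \<in> w"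
  shows "path_count a v \<alpha> \<beta> = path_count a v \<alpha> \<beta>'"
  using inter_num_eq_path_count assms by metis

lemma path_count_diagonal:
  assumes "a \<in> G" "v \<in> G" "v \<noteq> a\<inverse>"
  shows "path_count a v \<alpha> \<alpha> = 0"
proof -
  have "a `` {\<alpha>} \<inter> v\<inverse> `` {\<alpha>} = {}"
  proof (rule ccontr)
    assume "a `` {\<alpha>} \<inter> v\<inverse> `` {\<alpha>} \<noteq> {}"
    then obtain \<gamma> where "(\<alpha>, \<gamma>) \<in> a" "(\<alpha>, \<gamma>) \<in> v\<inverse>"
      by auto
    then have "a = v\<inverse>"
      by (rule relation_unique[OF assms(1) converse_in[OF assms(2)]])
    then show False
      using assms(3) by auto
  qed
  then show ?thesis
    unfolding path_count_def by simp
qed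

lemma sum_path_count:
  assumes "a \<in> G" "v \<in> G" "\<alpha> \<in> X"
  shows "(\<Sum>\<beta>\<in>X. path_count a v \<alpha> \<beta>) = valency X a * valency X v"
proof -
  have "(\<Sum>\<beta>\<in>X. path_count a v \<alpha> \<beta>) = (\<Sum>\<beta>\<in>X. card {\<gamma>\<in>a `` {\<alpha>}. (\<gamma>, \<beta>) \<in> v})"
    unfolding path_count_def by (intro sum.cong arg_cong[where f = card]) auto
  also have "\<dots> = (\<Sum>\<gamma>\<in>a `` {\<alpha>}. card {\<beta>\<in>X. (\<gamma>, \<beta>) \<in> v})"
    by (rule sum_card_filter_swap) (simp_all add: finite_X finite_relation_Image assms)
  also have "\<dots> = (\<Sum>\<gamma>\<in>a `` {\<alpha>}. valency X v)"
  proof (rule sum.cong)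
    fix \<gamma> assume "\<gamma> \<in> a `` {\<alpha>}"
    then have "\<gamma> \<in> X"
      using relation_subset assms(1) by blast
    moreover have "{\<beta>\<in>X. (\<gamma>, \<beta>) \<in> v} = v `` {\<gamma>}"
      using relation_subset[OF assms(2)] by blast
    ultimately show "card {\<beta>\<in>X. (\<gamma>, \<beta>) \<in> v} = valency X v"
      using valency_eq_card[OF assms(2)] by simp
  qed simp
  finally show ?thesis
    using valency_eq_card[OF assms(1,3)] by simp
qed

lemma small_path_counts_within_relation:
  assumes \<alpha>: "\<alpha> \<in> X" and a: "a \<in> G - {Id_on X}" and v: "v \<in> G" "v \<noteq> a\<inverse>"
    and unique: "\<And>w w'. w \<in> G - {Id_on X} \<Longrightarrow> w' \<in> G - {Id_on X} \<Longrightarrow>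
        0 < inter_num X a v w \<Longrightarrow> inter_num X a v w < l \<Longrightarrow>
        0 < inter_num X a v w' \<Longrightarrow> inter_num X a v w' < l \<Longrightarrow> w = w'"
  obtains w where "w \<in> G - {Id_on X}"
    "{\<beta>\<in>X. 0 < path_count a v \<alpha> \<beta> \<and> path_count a v \<alpha> \<beta> < l} \<subseteq> w `` {\<alpha>}"
proof -
  let ?small = "\<lambda>\<beta>. 0 < path_count a v \<alpha> \<beta> \<and> path_count a v \<alpha> \<beta> < l"
  have relation_small: "\<exists>w\<in>G - {Id_on X}. (\<alpha>, \<beta>) \<in> w \<and> 0 < inter_num X a v w \<and> inter_num X a v w < l"
    if \<beta>: "\<beta> \<in> X" "?small \<beta>" for \<beta>
  proof -
    have "path_count a v \<alpha> \<alpha> = 0"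
      using path_count_diagonal[of a v \<alpha>] a v by simp
    then have "\<beta> \<noteq> \<alpha>"
      using \<beta>(2) by auto
    then obtain w where "w \<in> G - {Id_on X}" "(\<alpha>, \<beta>) \<in> w"
      using relation_of_pair[OF \<alpha> \<beta>(1)] by blast
    then show ?thesis
      using inter_num_eq_path_count a v \<beta>(2) by auto
  qed
  show ?thesis
  proof (cases "\<exists>\<beta>\<in>X. ?small \<beta>")
    case True
    then obtain \<beta>\<^sub>0 w\<^sub>0 where w\<^sub>0: "w\<^sub>0 \<in> G - {Id_on X}" "(\<alpha>, \<beta>\<^sub>0) \<in> w\<^sub>0"
      "0 < inter_num X a v w\<^sub>0" "inter_num X a v w\<^sub>0 < l"
      using relation_small by blast
    have "{\<beta>\<in>X. ?small \<beta>} \<subseteq> w\<^sub>0 `` {\<alpha>}"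
      using relation_small unique[OF _ w\<^sub>0(1) _ _ w\<^sub>0(3,4)] by blast
    then show ?thesis
      using that w\<^sub>0(1) by blast
  qed (use that a in blast)
qed

lemma large_path_counts_fill_relation:
  assumes \<alpha>: "\<alpha> \<in> X" and a: "a \<in> G" and v: "v \<in> G" "v \<noteq> a\<inverse>" and "0 < l"
    and \<beta>: "\<beta> \<in> X" "l \<le> path_count a v \<alpha> \<beta>"
  obtains w where "w \<in> G - {Id_on X}"
    "l * valency X w \<le> (\<Sum>\<beta>\<in>{\<beta>\<in>X. l \<le> path_count a v \<alpha> \<beta>}. path_count a v \<alpha> \<beta>)"
proof -
  let ?m = "path_count a v \<alpha>" and ?L = "{\<beta>\<in>X. l \<le> path_count a v \<alpha> \<beta>}"
  have "\<beta> \<noteq> \<alpha>"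
    using \<beta>(2) path_count_diagonal[OF a v] \<open>0 < l\<close> by auto
  then obtain w where w: "w \<in> G - {Id_on X}" "(\<alpha>, \<beta>) \<in> w"
    using relation_of_pair[OF \<alpha> \<beta>(1)] by blast
  have relation_const: "?m \<beta>' = ?m \<beta>" if "\<beta>' \<in> w `` {\<alpha>}" for \<beta>'
    using path_count_const_on_relation[OF a v(1) _ _ w(2)] w(1) that by blast
  then have relation_large: "w `` {\<alpha>} \<subseteq> ?L"
    using relation_subset[of w] w(1) \<beta>(2) by auto
  have "l * valency X w \<le> valency X w * ?m \<beta>"
    using mult_le_mono1[OF \<beta>(2)] by (simp add: mult.commute)
  also have "\<dots> = (\<Sum>\<beta>'\<in>w `` {\<alpha>}. ?m \<beta>')"
    using relation_const valency_eq_card[OF _ \<alpha>] w(1) by simp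
  also have "\<dots> \<le> (\<Sum>\<beta>'\<in>?L. ?m \<beta>')"
    by (rule sum_mono2[OF _ relation_large]) (simp_all add: finite_X)
  finally show ?thesis
    using that w(1) by blast
qed

lemma large_path_count_mass:
  fixes p q :: real
  assumes \<alpha>: "\<alpha> \<in> X" and a: "a \<in> G - {Id_on X}" and v: "v \<in> G - {Id_on X}" "v \<noteq> a\<inverse>"
    and valency_bounds: "\<And>w. w \<in> G - {Id_on X} \<Longrightarrow> p \<le> valency X w \<and> valency X w \<le> q"
    and few_small: "card {\<beta>\<in>X. 0 < path_count a v \<alpha> \<beta> \<and> path_count a v \<alpha> \<beta> < l} \<le> q"
    and "0 < p" "1 < l" "l * q < p\<^sup>2"
  shows "p ^ 3 / (2 * q) \<le> (\<Sum>\<beta>\<in>{\<beta>\<in>X. l \<le> path_count a v \<alpha> \<beta>}. path_count a v \<alpha> \<beta>)"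
proof -
  let ?m = "path_count a v \<alpha>" and ?L = "{\<beta>\<in>X. l \<le> path_count a v \<alpha> \<beta>}"
  have "p * p \<le> real (valency X a) * real (valency X v)"
    using valency_bounds[OF a] valency_bounds[OF v(1)] \<open>0 < p\<close> by (intro mult_mono) auto
  also have "\<dots> = (\<Sum>\<beta>\<in>X. ?m \<beta>)"
    using sum_path_count a v \<alpha> by simp
  also have "\<dots> \<le> (\<Sum>\<beta>\<in>?L. ?m \<beta>) + (real l - 1) * q"
  proof -
    have "real (\<Sum>\<beta>\<in>X. ?m \<beta>)
        \<le> real ((\<Sum>\<beta>\<in>?L. ?m \<beta>) + (l - 1) * card {\<beta>\<in>X. 0 < ?m \<beta> \<and> ?m \<beta> < l})"
      by (simp only: of_nat_le_iff) (rule sum_le_sum_large_plus_small[OF finite_X])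
    also have "\<dots> = (\<Sum>\<beta>\<in>?L. ?m \<beta>) + (real l - 1) * card {\<beta>\<in>X. 0 < ?m \<beta> \<and> ?m \<beta> < l}"
      using \<open>1 < l\<close> by (simp add: of_nat_diff)
    also have "\<dots> \<le> (\<Sum>\<beta>\<in>?L. ?m \<beta>) + (real l - 1) * q"
      using few_small \<open>1 < l\<close> by (simp add: mult_left_mono)
    finally show ?thesis .
  qed
  finally have mass_lower: "p\<^sup>2 - (real l - 1) * q \<le> (\<Sum>\<beta>\<in>?L. ?m \<beta>)"
    by (simp add: power2_eq_square)
  have "p \<le> q"
    using valency_bounds[OF a] by linarith
  then have "(real l - 1) * q < p\<^sup>2"
    using \<open>l * q < p\<^sup>2\<close> \<open>0 < p\<close> by (smt (verit) mult_right_mono)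
  then have "?L \<noteq> {}"
  proof (rule contrapos_pn)
    assume "?L = {}"
    then have "real (\<Sum>\<beta>\<in>?L. ?m \<beta>) = 0"
      by (simp only: sum.empty of_nat_0)
    then show "\<not> (real l - 1) * q < p\<^sup>2"
      using mass_lower by linarith
  qed
  then obtain \<beta>\<^sub>1 where "\<beta>\<^sub>1 \<in> X" "l \<le> ?m \<beta>\<^sub>1"
    by blast
  moreover have "0 < l"
    using \<open>1 < l\<close> by simp
  ultimately obtain w where w: "w \<in> G - {Id_on X}" "l * valency X w \<le> (\<Sum>\<beta>\<in>?L. ?m \<beta>)"
    using large_path_counts_fill_relation[OF \<alpha> DiffD1[OF a] DiffD1[OF v(1)] v(2)] by blast
  have "l * p \<le> l * valency X w"
    using valency_bounds[OF w(1)] \<open>1 < l\<close> by simp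
  also have "\<dots> \<le> (\<Sum>\<beta>\<in>?L. ?m \<beta>)"
    using w(2) by (metis of_nat_le_iff of_nat_mult)
  finally have "l * p \<le> (\<Sum>\<beta>\<in>?L. ?m \<beta>)" .
  then show ?thesis
    using cube_bound_from_two_lower_bounds[OF \<open>0 < p\<close> \<open>p \<le> q\<close> _ mass_lower] \<open>1 < l\<close> by simp
qed

text \<open>Both sides count the triples \<open>(\<beta>, x, y)\<close> with \<open>x \<noteq> y\<close> in \<open>U\<close> and \<open>(x, \<beta>)\<close>, \<open>(y, \<beta>)\<close>
  in a common relation.\<close>

lemma pairs_in_common_relation_double_count:
  assumes "U \<subseteq> X"
  shows "(\<Sum>\<beta>\<in>X. \<Sum>v\<in>G. card ((U \<inter> v\<inverse> `` {\<beta>}) \<times> (U \<inter> v\<inverse> `` {\<beta>}) - Id))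
       = (\<Sum>p\<in>U \<times> U - Id. card {\<beta>\<in>X. \<exists>v\<in>G. (fst p, \<beta>) \<in> v \<and> (snd p, \<beta>) \<in> v})"
proof -
  have finite_U: "finite U"
    using assms finite_X by (rule finite_subset)
  have "(\<Sum>v\<in>G. card ((U \<inter> v\<inverse> `` {\<beta>}) \<times> (U \<inter> v\<inverse> `` {\<beta>}) - Id))
      = card {p\<in>U \<times> U - Id. \<exists>v\<in>G. (fst p, \<beta>) \<in> v \<and> (snd p, \<beta>) \<in> v}" for \<beta>
  proof -
    have "(\<Sum>v\<in>G. card ((U \<inter> v\<inverse> `` {\<beta>}) \<times> (U \<inter> v\<inverse> `` {\<beta>}) - Id))
        = card (\<Union>v\<in>G. (U \<inter> v\<inverse> `` {\<beta>}) \<times> (U \<inter> v\<inverse> `` {\<beta>}) - Id)"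
      by (rule card_UN_disjoint[symmetric]) (auto simp: finite_G finite_U dest: relation_unique)
    also have "(\<Union>v\<in>G. (U \<inter> v\<inverse> `` {\<beta>}) \<times> (U \<inter> v\<inverse> `` {\<beta>}) - Id)
        = {p\<in>U \<times> U - Id. \<exists>v\<in>G. (fst p, \<beta>) \<in> v \<and> (snd p, \<beta>) \<in> v}"
      by (rule set_eqI) (clarsimp; blast)
    finally show ?thesis .
  qed
  then show ?thesis
    using sum_card_filter_swap[of X "U \<times> U - Id"] finite_X finite_U by simp
qed

lemma pairs_with_large_path_count_bound:
  fixes r :: real
  assumes \<alpha>: "\<alpha> \<in> X" and a: "a \<in> G"
    and indist_bound: "\<And>g. g \<in> G - {Id_on X} \<Longrightarrow> indist_num X G g \<le> r"
  shows "real (card (a `` {\<alpha>} \<times> a `` {\<alpha>} - Id)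
           + (l - 1) * (\<Sum>v\<in>G - {Id_on X, a\<inverse>}. \<Sum>\<beta>\<in>{\<beta>\<in>X. l \<le> path_count a v \<alpha> \<beta>}. path_count a v \<alpha> \<beta>))
         \<le> card (a `` {\<alpha>} \<times> a `` {\<alpha>} - Id) * r"
proof -
  let ?U = "a `` {\<alpha>}" and ?m = "\<lambda>v. path_count a v \<alpha>"
  define F where "F v = (\<Sum>\<beta>\<in>X. card ((?U \<inter> v\<inverse> `` {\<beta>}) \<times> (?U \<inter> v\<inverse> `` {\<beta>}) - Id))" for v
  have F_eq: "F v = (\<Sum>\<beta>\<in>X. ?m v \<beta> * (?m v \<beta> - 1))" for v
    unfolding F_def path_count_def
    by (intro sum.cong refl card_Times_Diff_Id) (simp add: finite_relation_Image a)
  have "card (?U \<times> ?U - Id) \<le> F (a\<inverse>)"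
    using member_le_sum[of \<alpha> X "\<lambda>\<beta>. card ((?U \<inter> (a\<inverse>)\<inverse> `` {\<beta>}) \<times> (?U \<inter> (a\<inverse>)\<inverse> `` {\<beta>}) - Id)"]
      \<alpha> finite_X
    unfolding F_def by simp
  moreover have "(l - 1) * (\<Sum>\<beta>\<in>{\<beta>\<in>X. l \<le> ?m v \<beta>}. ?m v \<beta>) \<le> F v" for v
  proof -
    have "(l - 1) * (\<Sum>\<beta>\<in>{\<beta>\<in>X. l \<le> ?m v \<beta>}. ?m v \<beta>) \<le> (\<Sum>\<beta>\<in>{\<beta>\<in>X. l \<le> ?m v \<beta>}. ?m v \<beta> * (?m v \<beta> - 1))"
      unfolding sum_distrib_left by (rule sum_mono) (simp add: mult.commute diff_le_mono)
    also have "\<dots> \<le> F v"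
      unfolding F_eq by (rule sum_mono2) (auto simp: finite_X)
    finally show ?thesis .
  qed
  then have "(l - 1) * (\<Sum>v\<in>G - {Id_on X, a\<inverse>}. \<Sum>\<beta>\<in>{\<beta>\<in>X. l \<le> ?m v \<beta>}. ?m v \<beta>) \<le> (\<Sum>v\<in>G - {Id_on X, a\<inverse>}. F v)"
    unfolding sum_distrib_left by (rule sum_mono)
  ultimately have "card (?U \<times> ?U - Id) + (l - 1) * (\<Sum>v\<in>G - {Id_on X, a\<inverse>}. \<Sum>\<beta>\<in>{\<beta>\<in>X. l \<le> ?m v \<beta>}. ?m v \<beta>)
      \<le> (\<Sum>v\<in>insert (a\<inverse>) (G - {Id_on X, a\<inverse>}). F v)"
    by (simp add: finite_G)
  also have "\<dots> \<le> (\<Sum>v\<in>G. F v)"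
    by (rule sum_mono2) (auto simp: finite_G converse_in a)
  also have "\<dots> = (\<Sum>p\<in>?U \<times> ?U - Id. card {\<beta>\<in>X. \<exists>v\<in>G. (fst p, \<beta>) \<in> v \<and> (snd p, \<beta>) \<in> v})"
    unfolding F_def sum.swap[of _ X]
    by (rule pairs_in_common_relation_double_count) (use relation_subset a in blast)
  finally have pairs_le: "card (?U \<times> ?U - Id) + (l - 1) * (\<Sum>v\<in>G - {Id_on X, a\<inverse>}. \<Sum>\<beta>\<in>{\<beta>\<in>X. l \<le> ?m v \<beta>}. ?m v \<beta>)
      \<le> (\<Sum>p\<in>?U \<times> ?U - Id. card {\<beta>\<in>X. \<exists>v\<in>G. (fst p, \<beta>) \<in> v \<and> (snd p, \<beta>) \<in> v})" .
  have "real (\<Sum>p\<in>?U \<times> ?U - Id. card {\<beta>\<in>X. \<exists>v\<in>G. (fst p, \<beta>) \<in> v \<and> (snd p, \<beta>) \<in> v})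
      \<le> card (?U \<times> ?U - Id) * r"
    unfolding of_nat_sum
  proof (rule sum_bounded_above)
    fix p assume "p \<in> ?U \<times> ?U - Id"
    then obtain x y where p: "p = (x, y)" "x \<in> ?U" "y \<in> ?U" "x \<noteq> y"
      by auto
    then have "x \<in> X" "y \<in> X"
      using relation_subset a by auto
    then obtain g where g: "g \<in> G - {Id_on X}" "(x, y) \<in> g"
      using relation_of_pair \<open>x \<noteq> y\<close> by blast
    then show "real (card {\<beta>\<in>X. \<exists>v\<in>G. (fst p, \<beta>) \<in> v \<and> (snd p, \<beta>) \<in> v}) \<le> r"
      using indist_bound[OF g(1)] indist_num_eq_card[of g x y] p(1) by simp
  qed
  with pairs_le show ?thesis
    by (meson of_nat_le_iff order_trans)
qed

lemma card_neighbour_pairs: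
  assumes "\<alpha> \<in> X" "a \<in> G"
  shows "card (a `` {\<alpha>} \<times> a `` {\<alpha>} - Id) = valency X a * (valency X a - 1)"
  using card_Times_Diff_Id[OF finite_relation_Image] valency_eq_card assms by simp

lemma small_path_count_relation_unique:
  assumes none: "\<not> small_intersection_configuration X G l"
    and a: "a \<in> G - {Id_on X}" and v: "v \<in> G - {Id_on X}" "v \<noteq> a\<inverse>"
    and w: "w \<in> G - {Id_on X}" "0 < inter_num X a v w" "inter_num X a v w < l"
    and w': "w' \<in> G - {Id_on X}" "0 < inter_num X a v w'" "inter_num X a v w' < l"
  shows "w = w'"
proof -
  have configuration: "small_intersection_configuration X G l"
    if "x \<in> G - {Id_on X}" "y \<in> G - {Id_on X}" "x \<noteq> y"
      "0 < inter_num X a v x" "inter_num X a v x \<le> inter_num X a v y" "inter_num X a v y < l"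
    for x y
    unfolding small_intersection_configuration_def
    by (rule bexI[where x = "a\<inverse>"], rule bexI[where x = v], rule bexI[where x = x], rule bexI[where x = y])
      (use that converse_in_nonidentity[OF a] v in auto)
  show ?thesis
    using configuration[of w w'] configuration[of w' w] none w w' by fastforce
qed

lemma large_path_count_mass_without_configuration:
  fixes p q :: real
  assumes none: "\<not> small_intersection_configuration X G l"
    and \<alpha>: "\<alpha> \<in> X" and a: "a \<in> G - {Id_on X}" and v: "v \<in> G - {Id_on X}" "v \<noteq> a\<inverse>"
    and valency_bounds: "\<And>w. w \<in> G - {Id_on X} \<Longrightarrow> p \<le> valency X w \<and> valency X w \<le> q"
    and "0 < p" "1 < l" "l * q < p\<^sup>2"
  shows "p ^ 3 / (2 * q) \<le> (\<Sum>\<beta>\<in>{\<beta>\<in>X. l \<le> path_count a v \<alpha> \<beta>}. path_count a v \<alpha> \<beta>)"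
proof -
  obtain w where w: "w \<in> G - {Id_on X}"
    and small_in_w: "{\<beta>\<in>X. 0 < path_count a v \<alpha> \<beta> \<and> path_count a v \<alpha> \<beta> < l} \<subseteq> w `` {\<alpha>}"
    using small_path_counts_within_relation[OF \<alpha> a _ v(2) small_path_count_relation_unique[OF none a v]] v(1)
    by blast
  have "card {\<beta>\<in>X. 0 < path_count a v \<alpha> \<beta> \<and> path_count a v \<alpha> \<beta> < l} \<le> valency X w"
    using card_mono[OF finite_relation_Image small_in_w] valency_eq_card[OF _ \<alpha>] w by simp
  then show ?thesis
    using large_path_count_mass[OF \<alpha> a v valency_bounds] valency_bounds[OF w] assms(7-9)
    by fastforce
qed

lemma small_intersection_configuration_if_many_relations:
  fixes p q r :: real
  assumes valency_bounds: "\<And>w. w \<in> G - {Id_on X} \<Longrightarrow> p \<le> valency X w \<and> valency X w \<le> q"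
    and indist_bound: "\<And>g. g \<in> G - {Id_on X} \<Longrightarrow> indist_num X G g \<le> r"
    and "0 < p" "0 < q" "0 \<le> r" "1 < l" "l * q < p\<^sup>2"
    and many_relations: "2 * (q / p) ^ 3 * r \<le> (real l - 1) * (real (card G) - 2)"
  shows "small_intersection_configuration X G l"
proof (rule ccontr)
  assume none: "\<not> small_intersection_configuration X G l"
  have "0 \<le> 2 * (q / p) ^ 3 * r"
    using assms(3-5) by simp
  then have "0 \<le> (real l - 1) * (real (card G) - 2)"
    using many_relations by linarith
  then have "2 \<le> card G"
    using \<open>1 < l\<close> by (simp add: zero_le_mult_iff)
  then have "\<not> G \<subseteq> {Id_on X}"
    using card_mono[of "{Id_on X}" G] by auto
  then obtain a where a: "a \<in> G - {Id_on X}"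
    by blast
  obtain \<alpha> where \<alpha>: "\<alpha> \<in> X"
    using relation_nonempty[OF Id_on_in] by auto
  define G' where "G' = G - {Id_on X, a\<inverse>}"
  let ?S = "\<Sum>v\<in>G'. \<Sum>\<beta>\<in>{\<beta>\<in>X. l \<le> path_count a v \<alpha> \<beta>}. path_count a v \<alpha> \<beta>"
  let ?pairs = "card (a `` {\<alpha>} \<times> a `` {\<alpha>} - Id)"
  have "Id_on X \<noteq> a\<inverse>"
    using converse_in_nonidentity[OF a] by auto
  then have "card {Id_on X, a\<inverse>} = 2"
    by simp
  then have "card G' = card G - 2"
    using converse_in_nonidentity[OF a] Id_on_in by (simp add: G'_def card_Diff_subset finite_G)
  moreover have "card G' * (p ^ 3 / (2 * q)) \<le> ?S"
    using sum_mono[of G' "\<lambda>_. p ^ 3 / (2 * q)"] assms(3,6,7) valency_bounds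
      large_path_count_mass_without_configuration[OF none \<alpha> a]
    by (fastforce simp: G'_def of_nat_sum)
  moreover have "real l < valency X a" "valency X a \<le> q"
    using valency_bounds[OF a] assms(3,6,7) by (smt (verit) mult_left_mono mult_right_mono power2_eq_square)+
  then have "0 < real ?pairs" "?pairs \<le> q\<^sup>2"
    using card_neighbour_pairs[OF \<alpha>] a \<open>1 < l\<close> by (auto simp: power2_eq_square intro!: mult_mono)
  ultimately have "?pairs * r < ?pairs + (real l - 1) * ?S"
    using \<open>2 \<le> card G\<close> many_relations assms(3-6)
    by (intro pair_count_exceeds_indist_bound) (simp_all add: of_nat_diff)
  moreover have "real (?pairs + (l - 1) * ?S) \<le> ?pairs * r"
    unfolding G'_def using pairs_with_large_path_count_bound[OF \<alpha>, of a r l] a indist_bound by simp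
  ultimately show False
    using \<open>1 < l\<close> by (simp add: of_nat_diff)
qed

end

theorem theorem1p3:
  fixes X :: "'a set" and G :: "('a \<times> 'a) set set"
    and c k l :: nat and \<delta>\<^sub>1 \<delta>'\<^sub>1 \<delta>'\<^sub>2 :: real
  assumes scheme: "assoc_scheme X G"
    and d1: "0 < \<delta>\<^sub>1" "\<delta>\<^sub>1 \<le> 1"
    and d1': "0 < \<delta>'\<^sub>1" "\<delta>'\<^sub>1 \<le> 1"
    and d2': "0 < \<delta>'\<^sub>2" "\<delta>'\<^sub>2 \<le> 1"
    and l_gt: "1 < l"
    and l_lt: "real l < (\<delta>\<^sub>1 ^ 2 / \<delta>'\<^sub>1) * real k"
    and val: "\<And>g. g \<in> G \<Longrightarrow> g \<noteq> Id_on X \<Longrightarrow>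
                \<delta>\<^sub>1 * real k \<le> real (valency X g) \<and> real (valency X g) \<le> \<delta>'\<^sub>1 * real k"
    and ind: "\<And>g. g \<in> G \<Longrightarrow> g \<noteq> Id_on X \<Longrightarrow> real (indist_num X G g) \<le> \<delta>'\<^sub>2 * real c"
    and cardG: "real (card G) \<ge> 2 * (\<delta>'\<^sub>1 / \<delta>\<^sub>1) ^ 3 * \<delta>'\<^sub>2 * (real c / (real l - 1)) + 2"
  shows "\<exists>u\<in>G - {Id_on X}. \<exists>v\<in>G - {Id_on X}. \<exists>w\<in>G - {Id_on X}. \<exists>w'\<in>G - {Id_on X}.
           u \<noteq> v \<and> w \<noteq> w' \<and>
           0 < inter_num X (u\<inverse>) v w \<and>
           inter_num X (u\<inverse>) v w \<le> inter_num X (u\<inverse>) v w' \<and>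
           inter_num X (u\<inverse>) v w' < l"
proof -
  interpret association_scheme X G
    by (rule association_scheme.intro) (rule scheme)
  define p q r where "p = \<delta>\<^sub>1 * k" and "q = \<delta>'\<^sub>1 * k" and "r = \<delta>'\<^sub>2 * c"
  have "0 < real k"
    using l_lt by (cases "k = 0") auto
  have "real l * \<delta>'\<^sub>1 * k < \<delta>\<^sub>1\<^sup>2 * k * k"
    using l_lt d1' \<open>0 < real k\<close> by (simp add: field_simps)
  then have "real l * q < p\<^sup>2"
    by (simp add: p_def q_def power2_eq_square ac_simps)
  moreover have "2 * (q / p) ^ 3 * r \<le> (real l - 1) * (real (card G) - 2)"
  proof -
    have "(real l - 1) * (2 * (\<delta>'\<^sub>1 / \<delta>\<^sub>1) ^ 3 * \<delta>'\<^sub>2 * (real c / (real l - 1))) = 2 * (q / p) ^ 3 * r"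
      using l_gt \<open>0 < real k\<close> by (simp add: p_def q_def r_def)
    moreover have "2 * (\<delta>'\<^sub>1 / \<delta>\<^sub>1) ^ 3 * \<delta>'\<^sub>2 * (real c / (real l - 1)) \<le> real (card G) - 2"
      using cardG by linarith
    then have "(real l - 1) * (2 * (\<delta>'\<^sub>1 / \<delta>\<^sub>1) ^ 3 * \<delta>'\<^sub>2 * (real c / (real l - 1)))
        \<le> (real l - 1) * (real (card G) - 2)"
      using l_gt by (intro mult_left_mono) auto
    ultimately show ?thesis
      by simp
  qed
  ultimately have "small_intersection_configuration X G l"
    using d1 d1' d2' l_gt \<open>0 < real k\<close> val ind
    by (intro small_intersection_configuration_if_many_relations[where p = p and q = q and r = r])
      (simp_all add: p_def q_def r_def)
  then show ?thesis
    unfolding small_intersection_configuration_def .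
qed

end
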